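(* With notation as in the context, for all $1\le i,j\le m+n$ and $1\le r\le\ell$, $$\mu(t^{(r)}_{ij;\mathfrak{b}})=\sum_{1\le s_1<\cdots<s_r\le\ell}\ \sum_{1\le i_1,\dots,i_{r-1}\le m+n}(-1)^{|i|+|i_1|+\cdots+|i_{r-1}|}\,e^{[s_1]}_{i,i_1}e^{[s_2]}_{i_1,i_2}\cdots e^{[s_r]}_{i_{r-1},j}.$$
   Context: Let $m,n,\ell$ be non-negative integers and $\mathfrak{b}=(\mathfrak{b}_1,\dots,\mathfrak{b}_{m+n})$ a sequence with $m$ entries $\delta$ and $n$ entries $\epsilon$; $|i|=\bar0$ if $\mathfrak{b}_i=\delta$, $|i|=\bar1$ if $\mathfrak{b}_i=\epsilon$. Let $\pi$ be a rectangular array of boxes with $m+n$ rows (top to bottom) and $\ell$ columns (left to right), row $i$ of parity $|i|$; for a box $a$ write $\mathrm{row}(a)$, $\mathrm{col}(a)$, $|a|:=|\mathrm{row}(a)|$, and let $i\star c$ be the box in row $i$, column $c$. Let $V=\mathbb{C}^{M|N}$ ($M=m\ell$, $N=n\ell$) have homogeneous basis $\{v_a\}$ indexed by boxes, $v_a$ of parity $|a|$; $\mathfrak{g}=\mathfrak{gl}_{M|N}=\mathrm{End}(V)$ with matrix units $e_{a,b}$. Let $\mathfrak{p}=\mathrm{span}\{e_{a,b}:\mathrm{col}(a)\le\mathrm{col}(b)\}$ and $\mathfrak{h}=\mathrm{span}\{e_{a,b}:\mathrm{col}(a)=\mathrm{col}(b)\}\cong\mathfrak{gl}_{m|n}^{\oplus\ell}$,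 with basis $e^{[c]}_{i,j}:=e_{i\star c,\,j\star c}$. Let $\xi:U(\mathfrak{p})\to U(\mathfrak{h})$ be the algebra homomorphism induced by the projection $\mathfrak{p}\to\mathfrak{h}$ with kernel $\mathrm{span}\{e_{a,b}:\mathrm{col}(a)<\mathrm{col}(b)\}$. For $1\le c\le\ell$ put $\rho_c=-(\ell-c)(m-n)$, and let $\eta:U(\mathfrak{h})\to U(\mathfrak{h})$ be the algebra automorphism with $e^{[c]}_{i,j}\mapsto e^{[c]}_{i,j}-\delta_{ij}(-1)^{|i|}\rho_c$. Set $\mu=\eta\circ\xi$. Let $\tilde e_{a,b}=(-1)^{\mathrm{col}(b)-\mathrm{col}(a)}(e_{a,b}+\delta_{ab}(-1)^{|a|}\rho_{\mathrm{col}(a)})$, and for $1\le r\le\ell$ let $t^{(r)}_{ij;\mathfrak{b}}=\sum_{s=1}^r\sum(-1)^{|a_1|+\cdots+|a_s|}\tilde e_{a_1,b_1}\cdots\tilde e_{a_s,b_s}\in U(\mathfrak{p})$, the inner sum over boxes $a_1,\dots,a_s,b_1,\dots,b_s$ with $\sum_t(\mathrm{col}(b_t)-\mathrm{col}(a_t)+1)=r$; $\mathrm{col}(a_t)\le\mathrm{col}(b_t)$ for all $t$; $\mathrm{col}(b_t)<\mathrm{col}(a_{t+1})$ and $\mathrm{row}(b_t)=\mathrm{row}(a_{t+1})$ for $t<s$; $\mathrm{row}(a_1)=i$, $\mathrm{row}(b_s)=j$. *)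

theory Defs
  imports Main "HOL.Complex"
begin

text \<open>Elements of the free associative algebra on a generator type 'g are
represented as coefficient functions on words; only finitely supported
functions arise.  The product is concatenation-convolution.\<close>

type_synonym 'g fa = "'g list \<Rightarrow> complex"

definition fa_zero :: "'g fa" where "fa_zero = (\<lambda>_. 0)"
definition fa_add :: "'g fa \<Rightarrow> 'g fa \<Rightarrow> 'g fa" where
  "fa_add f g = (\<lambda>w. f w + g w)"
definition fa_smult :: "complex \<Rightarrow> 'g fa \<Rightarrow> 'g fa" where
  "fa_smult c f = (\<lambda>w. c * f w)"
definition fa_sub :: "'g fa \<Rightarrow> 'g fa \<Rightarrow> 'g fa" where
  "fa_sub f g = (\<lambda>w. f w - g w)"
definition fa_mult :: "'g fa \<Rightarrow> 'g fa \<Rightarrow> 'g fa" where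
  "fa_mult f g = (\<lambda>w. \<Sum>k\<le>length w. f (take k w) * g (drop k w))"
definition fa_const :: "complex \<Rightarrow> 'g fa" where
  "fa_const c = (\<lambda>w. if w = [] then c else 0)"
definition fa_word :: "'g list \<Rightarrow> 'g fa" where
  "fa_word u = (\<lambda>w. if w = u then 1 else 0)"
definition fa_gen :: "'g \<Rightarrow> 'g fa" where
  "fa_gen x = fa_word [x]"
definition fa_prod :: "'g fa list \<Rightarrow> 'g fa" where
  "fa_prod xs = foldr fa_mult xs (fa_const 1)"
definition fa_sum :: "('i \<Rightarrow> 'g fa) \<Rightarrow> 'i set \<Rightarrow> 'g fa" where
  "fa_sum F A = (\<lambda>w. \<Sum>a\<in>A. F a w)"

definition fa_hom :: "('g \<Rightarrow> 'h fa) \<Rightarrow> 'g fa \<Rightarrow> 'h fa" where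
  "fa_hom \<phi> f = fa_sum (\<lambda>w. fa_smult (f w) (fa_prod (map \<phi> w))) {w. f w \<noteq> 0}"

inductive_set fa_ideal :: "'g fa set \<Rightarrow> 'g fa set" for R where
  zero: "fa_zero \<in> fa_ideal R"
| gen: "r \<in> R \<Longrightarrow> fa_mult (fa_mult (fa_word u) r) (fa_word v) \<in> fa_ideal R"
| add: "x \<in> fa_ideal R \<Longrightarrow> y \<in> fa_ideal R \<Longrightarrow> fa_add x y \<in> fa_ideal R"
| smult: "x \<in> fa_ideal R \<Longrightarrow> fa_smult c x \<in> fa_ideal R"

text \<open>A box is a pair (row, column). The sequence b is encoded by bb :: nat \<Rightarrow> bool,
with bb i = True iff b_i = epsilon (i.e. |i| = 1).\<close>
type_synonym box = "nat \<times> nat"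

definition row :: "box \<Rightarrow> nat" where "row a = fst a"
definition col :: "box \<Rightarrow> nat" where "col a = snd a"

definition rpar :: "(nat \<Rightarrow> bool) \<Rightarrow> nat \<Rightarrow> nat" where
  "rpar bb i = (if bb i then 1 else 0)"
definition bpar :: "(nat \<Rightarrow> bool) \<Rightarrow> box \<Rightarrow> nat" where
  "bpar bb a = rpar bb (row a)"

definition boxes :: "nat \<Rightarrow> nat \<Rightarrow> nat \<Rightarrow> box set" where
  "boxes m n l = {1..m+n} \<times> {1..l}"

definition pgens :: "nat \<Rightarrow> nat \<Rightarrow> nat \<Rightarrow> (box \<times> box) set" where
  "pgens m n l = {(a,b). a \<in> boxes m n l \<and> b \<in> boxes m n l \<and> col a \<le> col b}"
definition hgens :: "nat \<Rightarrow> nat \<Rightarrow> nat \<Rightarrow> (box \<times> box) set" where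
  "hgens m n l = {(a,b). a \<in> boxes m n l \<and> b \<in> boxes m n l \<and> col a = col b}"

definition kd :: "'a \<Rightarrow> 'a \<Rightarrow> complex" where
  "kd x y = (if x = y then 1 else 0)"

text \<open>Supercommutator relations of gl_{M|N} restricted to a spanning set S of
matrix units of a subalgebra:
 e_ab e_cd - (-1)^{(|a|+|b|)(|c|+|d|)} e_cd e_ab = delta_bc e_ad - (-1)^{...} delta_da e_cb.
U of the subalgebra = free algebra on S modulo the ideal generated by these.\<close>
definition super_rels :: "(nat \<Rightarrow> bool) \<Rightarrow> (box \<times> box) set \<Rightarrow> (box \<times> box) fa set" where
  "super_rels bb S = {(let sg = (-1::complex) ^ ((bpar bb a + bpar bb b) * (bpar bb c + bpar bb d))
       in fa_sub (fa_sub (fa_mult (fa_gen (a,b)) (fa_gen (c,d)))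
                         (fa_smult sg (fa_mult (fa_gen (c,d)) (fa_gen (a,b)))))
                 (fa_sub (fa_smult (kd b c) (fa_gen (a,d)))
                         (fa_smult (sg * kd d a) (fa_gen (c,b)))))
     | a b c d. (a,b) \<in> S \<and> (c,d) \<in> S}"

definition Uh_eq :: "nat \<Rightarrow> nat \<Rightarrow> nat \<Rightarrow> (nat \<Rightarrow> bool) \<Rightarrow> (box \<times> box) fa \<Rightarrow> (box \<times> box) fa \<Rightarrow> bool" where
  "Uh_eq m n l bb x y \<longleftrightarrow> fa_sub x y \<in> fa_ideal (super_rels bb (hgens m n l))"

definition rho :: "nat \<Rightarrow> nat \<Rightarrow> nat \<Rightarrow> nat \<Rightarrow> int" where
  "rho m n l c = - (int l - int c) * (int m - int n)"

text \<open>mu = eta o xi on generators of U(p); extended as algebra homomorphism.\<close>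
definition mu_gen :: "nat \<Rightarrow> nat \<Rightarrow> nat \<Rightarrow> (nat \<Rightarrow> bool) \<Rightarrow> box \<times> box \<Rightarrow> (box \<times> box) fa" where
  "mu_gen m n l bb g = (case g of (a,b) \<Rightarrow>
     if col a = col b then
       fa_sub (fa_gen (a,b)) (fa_const (kd a b * (-1) ^ bpar bb a * of_int (rho m n l (col a))))
     else fa_zero)"

definition mu :: "nat \<Rightarrow> nat \<Rightarrow> nat \<Rightarrow> (nat \<Rightarrow> bool) \<Rightarrow> (box \<times> box) fa \<Rightarrow> (box \<times> box) fa" where
  "mu m n l bb = fa_hom (mu_gen m n l bb)"

definition etil :: "nat \<Rightarrow> nat \<Rightarrow> nat \<Rightarrow> (nat \<Rightarrow> bool) \<Rightarrow> box \<Rightarrow> box \<Rightarrow> (box \<times> box) fa" where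
  "etil m n l bb a b = fa_smult ((-1) ^ (col b - col a))
      (fa_add (fa_gen (a,b)) (fa_const (kd a b * (-1) ^ bpar bb a * of_int (rho m n l (col a)))))"

definition tseqs :: "nat \<Rightarrow> nat \<Rightarrow> nat \<Rightarrow> nat \<Rightarrow> nat \<Rightarrow> nat \<Rightarrow> (box \<times> box) list set" where
  "tseqs m n l r i j = {ps.
      1 \<le> length ps \<and> length ps \<le> r \<and>
      (\<forall>p \<in> set ps. fst p \<in> boxes m n l \<and> snd p \<in> boxes m n l \<and> col (fst p) \<le> col (snd p)) \<and>
      (\<Sum>p\<leftarrow>ps. col (snd p) - col (fst p) + 1) = r \<and>
      (\<forall>t. Suc t < length ps \<longrightarrow>
           col (snd (ps ! t)) < col (fst (ps ! Suc t)) \<and> row (snd (ps ! t)) = row (fst (ps ! Suc t))) \<and>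
      row (fst (hd ps)) = i \<and> row (snd (last ps)) = j}"

definition tpoly :: "nat \<Rightarrow> nat \<Rightarrow> nat \<Rightarrow> (nat \<Rightarrow> bool) \<Rightarrow> nat \<Rightarrow> nat \<Rightarrow> nat \<Rightarrow> (box \<times> box) fa" where
  "tpoly m n l bb r i j = fa_sum
     (\<lambda>ps. fa_smult ((-1) ^ (\<Sum>p\<leftarrow>ps. bpar bb (fst p)))
                    (fa_prod (map (\<lambda>p. etil m n l bb (fst p) (snd p)) ps)))
     (tseqs m n l r i j)"

definition eh :: "nat \<Rightarrow> nat \<Rightarrow> nat \<Rightarrow> (box \<times> box) fa" where
  "eh c i j = fa_gen ((i,c),(j,c))"

definition rhs :: "nat \<Rightarrow> nat \<Rightarrow> nat \<Rightarrow> (nat \<Rightarrow> bool) \<Rightarrow> nat \<Rightarrow> nat \<Rightarrow> nat \<Rightarrow> (box \<times> box) fa" where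
  "rhs m n l bb r i j = fa_sum
     (\<lambda>(ss, is). let rows = i # is @ [j] in
        fa_smult ((-1) ^ (rpar bb i + (\<Sum>k\<leftarrow>is. rpar bb k)))
          (fa_prod (map (\<lambda>k. eh (ss ! k) (rows ! k) (rows ! Suc k)) [0..<r])))
     {(ss, is). length ss = r \<and> sorted_wrt (<) ss \<and> set ss \<subseteq> {1..l} \<and>
                length is = r - 1 \<and> set is \<subseteq> {1..m+n}}"

end

theory Submission imports Defs begin

text \<open>The homomorphism \<mu> kills \<open>etil a b\<close> whenever \<open>col a < col b\<close>, and for \<open>a, b\<close> in
the same column it sends \<open>etil a b\<close> to the generator \<open>e\<^sub>a\<^sub>b\<close> itself: the shift by \<rho>
built into \<open>etil\<close> is undone by the shift of \<eta>.  Hence only admissible sequences of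
same-column pairs survive.  Such a sequence has exactly \<open>r\<close> factors, strictly increasing
columns \<open>s\<^sub>1 < \<dots> < s\<^sub>r\<close> and matching consecutive rows, so it is one summand of the
right-hand side, and this correspondence is bijective.  The identity thus holds already in
the free algebra, a fortiori in \<open>U(h)\<close>.\<close>

definition splits :: "'a list \<Rightarrow> ('a list \<times> 'a list) set" where
  "splits w = {(u, v). u @ v = w}"

lemma splits_eq_image: "splits w = (\<lambda>k. (take k w, drop k w)) ` {..length w}"
proof
  show "splits w \<subseteq> (\<lambda>k. (take k w, drop k w)) ` {..length w}"
  proof
    fix p assume "p \<in> splits w"
    then obtain u v where "p = (u, v)" "u @ v = w" by (auto simp: splits_def)
    then show "p \<in> (\<lambda>k. (take k w, drop k w)) ` {..length w}"
      by (intro image_eqI[where x = "length u"]) auto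
  qed
qed (auto simp: splits_def)

lemma finite_splits [simp]: "finite (splits w)"
  by (simp add: splits_eq_image)

lemma fa_mult_splits: "fa_mult f g w = (\<Sum>(u, v)\<in>splits w. f u * g v)"
  unfolding fa_mult_def
proof (rule sum.reindex_bij_witness[where i = "\<lambda>(u, v). length u" and j = "\<lambda>k. (take k w, drop k w)"])
qed (auto simp: splits_def)

lemma fa_mult_assoc: "fa_mult (fa_mult f g) h = fa_mult f (fa_mult g h)"
proof
  fix w
  have "fa_mult (fa_mult f g) h w = (\<Sum>((x, c), (u, v))\<in>Sigma (splits w) (\<lambda>p. splits (fst p)). f u * g v * h c)"
    by (simp add: fa_mult_splits sum_distrib_right sum.Sigma split_def)
  also have "\<dots> = (\<Sum>((u, y), (v, c))\<in>Sigma (splits w) (\<lambda>p. splits (snd p)). f u * (g v * h c))"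
    by (rule sum.reindex_bij_witness[where i = "\<lambda>((u, y), (v, c)). ((u @ v, c), (u, v))"
          and j = "\<lambda>((x, c), (u, v)). ((u, v @ c), (v, c))"])
       (auto simp: splits_def mult.assoc)
  also have "\<dots> = fa_mult f (fa_mult g h) w"
    by (simp add: fa_mult_splits sum_distrib_left sum.Sigma split_def)
  finally show "fa_mult (fa_mult f g) h w = fa_mult f (fa_mult g h) w" .
qed

lemma fa_mult_one_left [simp]: "fa_mult (fa_const 1) f = f"
proof
  fix w
  have "fa_mult (fa_const 1) f w = (\<Sum>k\<in>{0}. fa_const 1 (take k w) * f (drop k w))"
    unfolding fa_mult_def by (rule sum.mono_neutral_right) (auto simp: fa_const_def)
  then show "fa_mult (fa_const 1) f w = f w" by (simp add: fa_const_def)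
qed

lemma fa_mult_one_right [simp]: "fa_mult f (fa_const 1) = f"
proof
  fix w
  have "fa_mult f (fa_const 1) w = (\<Sum>k\<in>{length w}. f (take k w) * fa_const 1 (drop k w))"
    unfolding fa_mult_def by (rule sum.mono_neutral_right) (auto simp: fa_const_def)
  then show "fa_mult f (fa_const 1) w = f w" by (simp add: fa_const_def)
qed

lemma fa_mult_zero_left [simp]: "fa_mult fa_zero f = fa_zero"
  by (auto simp: fa_mult_def fa_zero_def)

lemma fa_mult_zero_right [simp]: "fa_mult f fa_zero = fa_zero"
  by (auto simp: fa_mult_def fa_zero_def)

lemma fa_prod_Nil [simp]: "fa_prod [] = fa_const 1"
  by (simp add: fa_prod_def)

lemma fa_prod_Cons [simp]: "fa_prod (x # xs) = fa_mult x (fa_prod xs)"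
  by (simp add: fa_prod_def)

lemma fa_prod_append: "fa_prod (xs @ ys) = fa_mult (fa_prod xs) (fa_prod ys)"
  by (induction xs) (simp_all add: fa_mult_assoc)

lemma fa_prod_zero: "fa_zero \<in> set xs \<Longrightarrow> fa_prod xs = fa_zero"
  by (induction xs) auto

lemma fa_sum_cong: "(\<And>a. a \<in> A \<Longrightarrow> F a = G a) \<Longrightarrow> fa_sum F A = fa_sum G A"
  by (auto simp: fa_sum_def intro!: ext sum.cong)

lemma fa_sum_mono_neutral:
  assumes "finite A" "B \<subseteq> A" "\<And>a. a \<in> A - B \<Longrightarrow> F a = fa_zero"
  shows "fa_sum F A = fa_sum F B"
  using assms by (auto simp: fa_sum_def fa_zero_def intro!: ext sum.mono_neutral_right)

lemma fa_sum_reindex_bij_betw: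
  "bij_betw h A B \<Longrightarrow> fa_sum F B = fa_sum (F \<circ> h) A"
  by (auto simp: fa_sum_def sum.reindex_bij_betw[symmetric] intro!: ext)

definition fa_supp :: "'g fa \<Rightarrow> 'g list set" where
  "fa_supp f = {w. f w \<noteq> 0}"

lemma fa_supp_mult: "fa_supp (fa_mult f g) \<subseteq> (\<lambda>(u, v). u @ v) ` (fa_supp f \<times> fa_supp g)"
proof
  fix w assume "w \<in> fa_supp (fa_mult f g)"
  then have "(\<Sum>(u, v)\<in>splits w. f u * g v) \<noteq> 0"
    by (simp add: fa_supp_def fa_mult_splits)
  then obtain p where "p \<in> splits w" "f (fst p) * g (snd p) \<noteq> 0"
    by (metis (mono_tags, lifting) split_def sum.neutral)
  then show "w \<in> (\<lambda>(u, v). u @ v) ` (fa_supp f \<times> fa_supp g)"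
    by (intro image_eqI[where x = p]) (auto simp: splits_def fa_supp_def)
qed

lemma finite_fa_supp_mult:
  "finite (fa_supp f) \<Longrightarrow> finite (fa_supp g) \<Longrightarrow> finite (fa_supp (fa_mult f g))"
  by (rule finite_subset[OF fa_supp_mult]) auto

lemma finite_fa_supp_add:
  "finite (fa_supp f) \<Longrightarrow> finite (fa_supp g) \<Longrightarrow> finite (fa_supp (fa_add f g))"
  by (rule finite_subset[of _ "fa_supp f \<union> fa_supp g"]) (auto simp: fa_supp_def fa_add_def)

lemma finite_fa_supp_smult: "finite (fa_supp f) \<Longrightarrow> finite (fa_supp (fa_smult c f))"
  by (rule finite_subset[of _ "fa_supp f"]) (auto simp: fa_supp_def fa_smult_def)

lemma finite_fa_supp_const: "finite (fa_supp (fa_const c))"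
  by (rule finite_subset[of _ "{[]}"]) (auto simp: fa_supp_def fa_const_def)

lemma finite_fa_supp_gen: "finite (fa_supp (fa_gen x))"
  by (rule finite_subset[of _ "{[x]}"]) (auto simp: fa_supp_def fa_gen_def fa_word_def)

lemma finite_fa_supp_prod:
  "(\<And>f. f \<in> set xs \<Longrightarrow> finite (fa_supp f)) \<Longrightarrow> finite (fa_supp (fa_prod xs))"
  by (induction xs) (auto intro: finite_fa_supp_mult finite_fa_supp_const)

section \<open>\<open>fa_hom\<close> is an algebra homomorphism on finitely supported elements\<close>

lemma fa_hom_eq_sum:
  assumes "finite W" "fa_supp f \<subseteq> W"
  shows "fa_hom \<phi> f x = (\<Sum>w\<in>W. f w * fa_prod (map \<phi> w) x)"
  unfolding fa_hom_def fa_sum_def fa_smult_def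
  using assms by (intro sum.mono_neutral_left) (auto simp: fa_supp_def)

lemma fa_hom_const: "fa_hom \<phi> (fa_const c) = fa_const c"
proof
  fix x
  have "fa_hom \<phi> (fa_const c) x = (\<Sum>w\<in>{[]}. fa_const c w * fa_prod (map \<phi> w) x)"
    by (rule fa_hom_eq_sum) (auto simp: fa_supp_def fa_const_def)
  then show "fa_hom \<phi> (fa_const c) x = fa_const c x" by (simp add: fa_const_def)
qed

lemma fa_hom_gen: "fa_hom \<phi> (fa_gen g) = \<phi> g"
proof
  fix x
  have "fa_hom \<phi> (fa_gen g) x = (\<Sum>w\<in>{[g]}. fa_gen g w * fa_prod (map \<phi> w) x)"
    by (rule fa_hom_eq_sum) (auto simp: fa_supp_def fa_gen_def fa_word_def)
  then show "fa_hom \<phi> (fa_gen g) x = \<phi> g x" by (simp add: fa_gen_def fa_word_def)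
qed

lemma fa_hom_add:
  assumes "finite (fa_supp f)" "finite (fa_supp g)"
  shows "fa_hom \<phi> (fa_add f g) = fa_add (fa_hom \<phi> f) (fa_hom \<phi> g)"
proof
  fix x
  let ?W = "fa_supp f \<union> fa_supp g"
  have "fa_hom \<phi> (fa_add f g) x = (\<Sum>w\<in>?W. fa_add f g w * fa_prod (map \<phi> w) x)"
    using assms by (intro fa_hom_eq_sum) (auto simp: fa_supp_def fa_add_def)
  also have "\<dots> = (\<Sum>w\<in>?W. f w * fa_prod (map \<phi> w) x) + (\<Sum>w\<in>?W. g w * fa_prod (map \<phi> w) x)"
    by (simp add: fa_add_def distrib_right sum.distrib)
  also have "\<dots> = fa_hom \<phi> f x + fa_hom \<phi> g x"
    using assms by (simp add: fa_hom_eq_sum[of ?W])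
  finally show "fa_hom \<phi> (fa_add f g) x = fa_add (fa_hom \<phi> f) (fa_hom \<phi> g) x"
    by (simp add: fa_add_def)
qed

lemma fa_hom_smult:
  assumes "finite (fa_supp f)"
  shows "fa_hom \<phi> (fa_smult c f) = fa_smult c (fa_hom \<phi> f)"
proof
  fix x
  have "fa_hom \<phi> (fa_smult c f) x = (\<Sum>w\<in>fa_supp f. c * f w * fa_prod (map \<phi> w) x)"
    using assms by (subst fa_hom_eq_sum) (auto simp: fa_supp_def fa_smult_def)
  also have "\<dots> = c * fa_hom \<phi> f x"
    using assms by (simp add: fa_hom_eq_sum[of "fa_supp f"] sum_distrib_left mult.assoc)
  finally show "fa_hom \<phi> (fa_smult c f) x = fa_smult c (fa_hom \<phi> f) x"
    by (simp add: fa_smult_def)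
qed

lemma fa_hom_sum:
  assumes "finite A" "\<And>a. a \<in> A \<Longrightarrow> finite (fa_supp (F a))"
  shows "fa_hom \<phi> (fa_sum F A) = fa_sum (\<lambda>a. fa_hom \<phi> (F a)) A"
proof
  fix x
  let ?W = "\<Union>a\<in>A. fa_supp (F a)"
  have W: "finite ?W" using assms by auto
  have "fa_hom \<phi> (fa_sum F A) x = (\<Sum>w\<in>?W. fa_sum F A w * fa_prod (map \<phi> w) x)"
    by (rule fa_hom_eq_sum[OF W]) (auto simp: fa_supp_def fa_sum_def intro: sum.neutral ccontr)
  also have "\<dots> = (\<Sum>a\<in>A. \<Sum>w\<in>?W. F a w * fa_prod (map \<phi> w) x)"
    by (simp add: fa_sum_def sum_distrib_right sum.swap[of _ A])
  also have "\<dots> = (\<Sum>a\<in>A. fa_hom \<phi> (F a) x)"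
    by (intro sum.cong refl fa_hom_eq_sum[symmetric, OF W]) auto
  finally show "fa_hom \<phi> (fa_sum F A) x = fa_sum (\<lambda>a. fa_hom \<phi> (F a)) A x"
    by (simp add: fa_sum_def)
qed

lemma fa_hom_mult:
  assumes f: "finite (fa_supp f)" and g: "finite (fa_supp g)"
  shows "fa_hom \<phi> (fa_mult f g) = fa_mult (fa_hom \<phi> f) (fa_hom \<phi> g)"
proof
  fix x
  let ?A = "fa_supp f" and ?B = "fa_supp g"
  let ?cat = "\<lambda>p. fst p @ snd p"
  let ?\<Phi> = "\<lambda>w. fa_prod (map \<phi> w)"
  have AB: "finite (?A \<times> ?B)" using f g by auto
  have mult_eq: "fa_mult f g w = (\<Sum>p\<in>{p \<in> ?A \<times> ?B. ?cat p = w}. f (fst p) * g (snd p))" for w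
    unfolding fa_mult_splits split_def
    by (rule sum.mono_neutral_right) (simp, auto simp: splits_def fa_supp_def)
  have "fa_hom \<phi> (fa_mult f g) x = (\<Sum>w\<in>?cat ` (?A \<times> ?B). fa_mult f g w * ?\<Phi> w x)"
    by (rule fa_hom_eq_sum) (use AB fa_supp_mult in \<open>auto simp: split_def\<close>)
  also have "\<dots> = (\<Sum>w\<in>?cat ` (?A \<times> ?B). \<Sum>p\<in>{p \<in> ?A \<times> ?B. ?cat p = w}.
                        f (fst p) * g (snd p) * ?\<Phi> (?cat p) x)"
    by (simp add: mult_eq sum_distrib_right)
  also have "\<dots> = (\<Sum>p\<in>?A \<times> ?B. f (fst p) * g (snd p) * ?\<Phi> (?cat p) x)"
    by (rule sum.image_gen[symmetric, OF AB])
  also have "\<dots> = (\<Sum>u\<in>?A. \<Sum>v\<in>?B. f u * g v * (\<Sum>k\<le>length x. ?\<Phi> u (take k x) * ?\<Phi> v (drop k x)))"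
    by (simp add: sum.cartesian_product fa_prod_append fa_mult_def split_def)
  also have "\<dots> = (\<Sum>k\<le>length x. (\<Sum>u\<in>?A. f u * ?\<Phi> u (take k x)) * (\<Sum>v\<in>?B. g v * ?\<Phi> v (drop k x)))"
    unfolding sum_product by (simp add: sum_distrib_left sum.swap[of _ "{..length x}"] mult_ac)
  also have "\<dots> = fa_mult (fa_hom \<phi> f) (fa_hom \<phi> g) x"
    by (simp add: fa_mult_def fa_hom_eq_sum[OF f order_refl] fa_hom_eq_sum[OF g order_refl])
  finally show "fa_hom \<phi> (fa_mult f g) x = fa_mult (fa_hom \<phi> f) (fa_hom \<phi> g) x" .
qed

lemma fa_hom_prod:
  "(\<And>f. f \<in> set xs \<Longrightarrow> finite (fa_supp f)) \<Longrightarrow>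
   fa_hom \<phi> (fa_prod xs) = fa_prod (map (fa_hom \<phi>) xs)"
  by (induction xs) (auto simp: fa_hom_const fa_hom_mult finite_fa_supp_prod)

section \<open>Same-column admissible sequences\<close>

definition diag_tseqs :: "nat \<Rightarrow> nat \<Rightarrow> nat \<Rightarrow> nat \<Rightarrow> nat \<Rightarrow> nat \<Rightarrow> (box \<times> box) list set" where
  "diag_tseqs m n l r i j = {ps \<in> tseqs m n l r i j. \<forall>p\<in>set ps. col (fst p) = col (snd p)}"

definition rhs_index :: "nat \<Rightarrow> nat \<Rightarrow> nat \<Rightarrow> nat \<Rightarrow> (nat list \<times> nat list) set" where
  "rhs_index m n l r = {(ss, is). length ss = r \<and> sorted_wrt (<) ss \<and> set ss \<subseteq> {1..l} \<and>
                          length is = r - 1 \<and> set is \<subseteq> {1..m+n}}"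

text \<open>An index \<open>(ss, is)\<close> lists the columns \<open>s\<^sub>1 < \<dots> < s\<^sub>r\<close> and the inner rows
\<open>i\<^sub>1, \<dots>, i\<^sub>r\<^sub>-\<^sub>1\<close> of a summand of the right-hand side.\<close>

definition column_seq :: "nat \<Rightarrow> nat \<Rightarrow> nat \<Rightarrow> nat list \<times> nat list \<Rightarrow> (box \<times> box) list" where
  "column_seq r i j q =
     map (\<lambda>k. (((i # snd q @ [j]) ! k, fst q ! k), ((i # snd q @ [j]) ! Suc k, fst q ! k))) [0..<r]"

definition seq_index :: "(box \<times> box) list \<Rightarrow> nat list \<times> nat list" where
  "seq_index ps = (map (\<lambda>p. col (fst p)) ps, map (\<lambda>p. row (fst p)) (tl ps))"

lemma length_column_seq [simp]: "length (column_seq r i j q) = r"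
  by (simp add: column_seq_def)

lemma nth_column_seq:
  "k < r \<Longrightarrow> column_seq r i j (ss, is) ! k =
     (((i # is @ [j]) ! k, ss ! k), ((i # is @ [j]) ! Suc k, ss ! k))"
  by (simp add: column_seq_def)

lemma rows_nth_less:
  "length is = r - 1 \<Longrightarrow> k < r \<Longrightarrow> (i # is @ [j]) ! k = (if k = 0 then i else is ! (k - 1))"
  by (cases k) (auto simp: nth_append)

lemma rows_nth_last: "length is = r - 1 \<Longrightarrow> 1 \<le> r \<Longrightarrow> (i # is @ [j]) ! r = j"
  by (cases r) (auto simp: nth_append)

lemma map_rows_nth: "length is = r - 1 \<Longrightarrow> 1 \<le> r \<Longrightarrow> map (\<lambda>k. (i # is @ [j]) ! k) [0..<r] = i # is"
  by (rule nth_equalityI) (auto simp: rows_nth_less nth_Cons' nth_append)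

lemma sum_list_const_one: "(\<And>p. p \<in> set ps \<Longrightarrow> f p = (1::nat)) \<Longrightarrow> (\<Sum>p\<leftarrow>ps. f p) = length ps"
  by (induction ps) auto

lemma column_seq_in_diag_tseqs:
  assumes q: "q \<in> rhs_index m n l r" and r: "1 \<le> r" and ij: "i \<in> {1..m+n}" "j \<in> {1..m+n}"
  shows "column_seq r i j q \<in> diag_tseqs m n l r i j"
proof -
  obtain ss "is" where qq: "q = (ss, is)" by (cases q)
  note S = q[unfolded qq rhs_index_def, simplified]
  let ?rows = "i # is @ [j]"
  let ?ps = "column_seq r i j q"
  note len = length_column_seq[of r i j q]
  note nth = nth_column_seq[of _ r i j ss "is", folded qq]
  have rows_in: "?rows ! k \<in> {1..m+n}" if "k \<le> r" for k
  proof -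
    have "?rows ! k \<in> set ?rows" using that S by (intro nth_mem) simp
    then show ?thesis using S ij by auto
  qed
  have same_col: "\<forall>p\<in>set ?ps. col (fst p) = col (snd p)"
    by (auto simp: column_seq_def col_def)
  have in_boxes: "\<forall>p\<in>set ?ps. fst p \<in> boxes m n l \<and> snd p \<in> boxes m n l \<and> col (fst p) \<le> col (snd p)"
  proof
    fix p assume "p \<in> set ?ps"
    then obtain k where k: "k < r" "p = ?ps ! k" using len by (metis in_set_conv_nth)
    have "ss ! k \<in> set ss" using k S by simp
    then have "ss ! k \<in> {1..l}" using S by fastforce
    then show "fst p \<in> boxes m n l \<and> snd p \<in> boxes m n l \<and> col (fst p) \<le> col (snd p)"
      using k nth[OF k(1)] rows_in[of k] rows_in[of "Suc k"] S
      by (auto simp: boxes_def col_def)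
  qed
  have weight: "(\<Sum>p\<leftarrow>?ps. col (snd p) - col (fst p) + 1) = r"
    using same_col len by (subst sum_list_const_one) auto
  have adjacent: "col (snd (?ps ! t)) < col (fst (?ps ! Suc t)) \<and> row (snd (?ps ! t)) = row (fst (?ps ! Suc t))"
    if "Suc t < length ?ps" for t
  proof -
    have "ss ! t < ss ! Suc t" using S that len by (auto intro: sorted_wrt_nth_less)
    then show ?thesis using that len nth[of t] nth[of "Suc t"] by (simp add: col_def row_def)
  qed
  have "?ps \<noteq> []" using r by (auto simp flip: length_0_conv)
  then have ends: "row (fst (hd ?ps)) = i" "row (snd (last ?ps)) = j"
    using nth[of 0] nth[of "r - 1"] r rows_nth_last[of "is" r i j] S len
    by (simp_all add: hd_conv_nth last_conv_nth row_def)
  show ?thesis unfolding diag_tseqs_def tseqs_def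
    using len r in_boxes weight adjacent ends same_col by simp
qed

lemma diag_tseqsD:
  assumes ps: "ps \<in> diag_tseqs m n l r i j"
  shows "length ps = r" "1 \<le> r"
    "\<And>p. p \<in> set ps \<Longrightarrow> fst p \<in> boxes m n l \<and> snd p \<in> boxes m n l \<and> col (fst p) = col (snd p)"
    "\<And>t. Suc t < length ps \<Longrightarrow>
       col (snd (ps ! t)) < col (fst (ps ! Suc t)) \<and> row (snd (ps ! t)) = row (fst (ps ! Suc t))"
    "row (fst (ps ! 0)) = i" "row (snd (ps ! (r - 1))) = j"
proof -
  note P = ps[unfolded diag_tseqs_def tseqs_def, simplified]
  have "(\<Sum>p\<leftarrow>ps. col (snd p) - col (fst p) + 1) = length ps"
    using P by (subst sum_list_const_one) auto
  then show len: "length ps = r" using P by simp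
  show "1 \<le> r" using P len by simp
  show "\<And>p. p \<in> set ps \<Longrightarrow> fst p \<in> boxes m n l \<and> snd p \<in> boxes m n l \<and> col (fst p) = col (snd p)"
    "\<And>t. Suc t < length ps \<Longrightarrow>
       col (snd (ps ! t)) < col (fst (ps ! Suc t)) \<and> row (snd (ps ! t)) = row (fst (ps ! Suc t))"
    using P by auto
  show "row (fst (ps ! 0)) = i" using P by (cases ps) auto
  have "ps \<noteq> []" using len P by auto
  then show "row (snd (ps ! (r - 1))) = j" using P by (simp add: last_conv_nth len)
qed

lemma seq_index_in_rhs_index:
  assumes ps: "ps \<in> diag_tseqs m n l r i j"
  shows "seq_index ps \<in> rhs_index m n l r"
proof -
  note D = diag_tseqsD[OF ps]
  have sorted: "sorted_wrt (<) (map (\<lambda>p. col (fst p)) ps)"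
    unfolding sorted_wrt_iff_nth_Suc_transp[OF transp_on_less]
    using D(3)[OF nth_mem] D(4) by fastforce
  have "set (map (\<lambda>p. col (fst p)) ps) \<subseteq> {1..l}"
    using D(3) by (auto simp: boxes_def col_def)
  moreover have "set (map (\<lambda>p. row (fst p)) (tl ps)) \<subseteq> {1..m+n}"
    using D(3) list.set_sel(2)[of ps] by (fastforce simp: boxes_def row_def)
  ultimately show ?thesis
    unfolding seq_index_def rhs_index_def using D(1) sorted by simp
qed

lemma column_seq_seq_index:
  assumes ps: "ps \<in> diag_tseqs m n l r i j"
  shows "column_seq r i j (seq_index ps) = ps"
proof (rule nth_equalityI)
  note D = diag_tseqsD[OF ps]
  let ?is = "map (\<lambda>p. row (fst p)) (tl ps)"
  have len_is: "length ?is = r - 1" using D(1) by simp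
  show "length (column_seq r i j (seq_index ps)) = length ps" using D(1) by simp
  fix k assume "k < length (column_seq r i j (seq_index ps))"
  then have k: "k < r" by simp
  have fst_row: "(i # ?is @ [j]) ! k = row (fst (ps ! k))"
    using rows_nth_less[OF len_is k] D(5) k D(1) by (auto simp: nth_tl)
  have snd_row: "(i # ?is @ [j]) ! Suc k = row (snd (ps ! k))"
  proof (cases "Suc k < r")
    case True
    then show ?thesis using rows_nth_less[OF len_is True] D(4)[of k] D(1) by (auto simp: nth_tl)
  next
    case False
    then have "Suc k = r" using k by simp
    then show ?thesis using rows_nth_last[OF len_is D(2)] D(6) by auto
  qed
  have "col (fst (ps ! k)) = col (snd (ps ! k))"
    using D(3)[OF nth_mem[of k ps]] D(1) k by simp
  then show "column_seq r i j (seq_index ps) ! k = ps ! k"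
    using k fst_row snd_row D(1)
    by (simp add: nth_column_seq seq_index_def) (metis row_def col_def prod.collapse)
qed

lemma seq_index_column_seq:
  assumes q: "q \<in> rhs_index m n l r" and r: "1 \<le> r"
  shows "seq_index (column_seq r i j q) = q"
proof -
  obtain ss "is" where qq: "q = (ss, is)" by (cases q)
  note S = q[unfolded qq rhs_index_def, simplified]
  let ?ps = "column_seq r i j q"
  have cols: "map (\<lambda>p. col (fst p)) ?ps = ss"
    by (rule nth_equalityI) (use S in \<open>auto simp: column_seq_def qq col_def\<close>)
  have rows: "map (\<lambda>p. row (fst p)) (tl ?ps) = is"
  proof (rule nth_equalityI)
    show "length (map (\<lambda>p. row (fst p)) (tl ?ps)) = length is" using S by simp
    fix k assume "k < length (map (\<lambda>p. row (fst p)) (tl ?ps))"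
    then have k: "Suc k < r" by simp
    have kt: "k < length (tl ?ps)" using k by simp
    have "map (\<lambda>p. row (fst p)) (tl ?ps) ! k = row (fst (?ps ! Suc k))"
      by (simp add: nth_map[OF kt] nth_tl[OF kt])
    also have "\<dots> = (i # is @ [j]) ! Suc k" using k by (simp add: nth_column_seq qq row_def)
    also have "\<dots> = is ! k" using k S by (simp add: nth_append less_diff_conv)
    finally show "map (\<lambda>p. row (fst p)) (tl ?ps) ! k = is ! k" .
  qed
  show ?thesis using cols rows qq by (simp add: seq_index_def)
qed

lemma bij_betw_column_seq:
  assumes "1 \<le> r" "i \<in> {1..m+n}" "j \<in> {1..m+n}"
  shows "bij_betw (column_seq r i j) (rhs_index m n l r) (diag_tseqs m n l r i j)"
  by (rule bij_betw_byWitness[where f' = seq_index])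
     (use assms in \<open>auto simp: seq_index_column_seq column_seq_seq_index
        column_seq_in_diag_tseqs seq_index_in_rhs_index\<close>)

lemma finite_tseqs: "finite (tseqs m n l r i j)"
proof (rule finite_subset)
  show "tseqs m n l r i j \<subseteq> {xs. set xs \<subseteq> boxes m n l \<times> boxes m n l \<and> length xs \<le> r}"
    by (auto simp: tseqs_def)
  show "finite {xs. set xs \<subseteq> boxes m n l \<times> boxes m n l \<and> length xs \<le> r}"
    by (rule finite_lists_length_le) (simp add: boxes_def)
qed

section \<open>The image of \<open>tpoly\<close> under \<mu>\<close>

lemma finite_fa_supp_etil: "finite (fa_supp (etil m n l bb a b))"
  unfolding etil_def by (intro finite_fa_supp_smult finite_fa_supp_add finite_fa_supp_gen finite_fa_supp_const)

lemma mu_etil: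
  "fa_hom (mu_gen m n l bb) (etil m n l bb (fst p) (snd p)) =
   (if col (fst p) = col (snd p) then fa_gen p else fa_zero)"
proof -
  obtain a b where p: "p = (a, b)" by (cases p)
  have "fa_hom (mu_gen m n l bb) (etil m n l bb a b) =
    fa_smult ((-1) ^ (col b - col a)) (fa_add (mu_gen m n l bb (a, b))
      (fa_const (kd a b * (-1) ^ bpar bb a * of_int (rho m n l (col a)))))"
    unfolding etil_def
    by (simp add: fa_hom_smult fa_hom_add fa_hom_gen fa_hom_const
        finite_fa_supp_add finite_fa_supp_gen finite_fa_supp_const)
  then show ?thesis unfolding p
    by (auto simp: mu_gen_def fa_smult_def fa_add_def fa_sub_def fa_const_def fa_zero_def kd_def intro!: ext)
qed

lemma mu_tpoly:
  "mu m n l bb (tpoly m n l bb r i j) =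
   fa_sum (\<lambda>ps. fa_smult ((-1) ^ (\<Sum>p\<leftarrow>ps. bpar bb (fst p))) (fa_prod (map fa_gen ps)))
          (diag_tseqs m n l r i j)"
proof -
  let ?sgn = "\<lambda>ps. (-1::complex) ^ (\<Sum>p\<leftarrow>ps. bpar bb (fst p))"
  let ?\<mu>e = "\<lambda>p. if col (fst p) = col (snd p) then fa_gen p else fa_zero"
  let ?e = "\<lambda>p. etil m n l bb (fst p) (snd p)"
  have finite_prod: "finite (fa_supp (fa_prod (map ?e ps)))" for ps
    by (rule finite_fa_supp_prod) (auto simp: finite_fa_supp_etil)
  have summand: "fa_hom (mu_gen m n l bb) (fa_smult c (fa_prod (map ?e ps))) =
                 fa_smult c (fa_prod (map ?\<mu>e ps))" for c ps
    by (subst fa_hom_smult[OF finite_prod], subst fa_hom_prod)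
       (auto simp: finite_fa_supp_etil mu_etil comp_def)
  have "mu m n l bb (tpoly m n l bb r i j) =
        fa_sum (\<lambda>ps. fa_smult (?sgn ps) (fa_prod (map ?\<mu>e ps))) (tseqs m n l r i j)"
    unfolding mu_def tpoly_def
    by (simp add: fa_hom_sum finite_tseqs finite_fa_supp_smult finite_prod summand)
  also have "\<dots> = fa_sum (\<lambda>ps. fa_smult (?sgn ps) (fa_prod (map ?\<mu>e ps))) (diag_tseqs m n l r i j)"
  proof (rule fa_sum_mono_neutral[OF finite_tseqs])
    show "diag_tseqs m n l r i j \<subseteq> tseqs m n l r i j" by (auto simp: diag_tseqs_def)
    fix ps assume "ps \<in> tseqs m n l r i j - diag_tseqs m n l r i j"
    then have "fa_zero \<in> set (map ?\<mu>e ps)" by (force simp: diag_tseqs_def)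
    then show "fa_smult (?sgn ps) (fa_prod (map ?\<mu>e ps)) = fa_zero"
      by (simp add: fa_prod_zero fa_smult_def fa_zero_def)
  qed
  also have "\<dots> = fa_sum (\<lambda>ps. fa_smult (?sgn ps) (fa_prod (map fa_gen ps))) (diag_tseqs m n l r i j)"
    by (rule fa_sum_cong) (simp add: diag_tseqs_def cong: map_cong)
  finally show ?thesis .
qed

lemma mu_tpoly_eq_rhs:
  assumes "1 \<le> r" "i \<in> {1..m+n}" "j \<in> {1..m+n}"
  shows "mu m n l bb (tpoly m n l bb r i j) = rhs m n l bb r i j"
proof -
  have "mu m n l bb (tpoly m n l bb r i j) =
        fa_sum ((\<lambda>ps. fa_smult ((-1) ^ (\<Sum>p\<leftarrow>ps. bpar bb (fst p))) (fa_prod (map fa_gen ps)))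
                \<circ> column_seq r i j) (rhs_index m n l r)"
    unfolding mu_tpoly by (rule fa_sum_reindex_bij_betw[OF bij_betw_column_seq[OF assms]])
  also have "\<dots> = rhs m n l bb r i j"
    unfolding rhs_def rhs_index_def[symmetric]
  proof (rule fa_sum_cong)
    fix q assume "q \<in> rhs_index m n l r"
    moreover obtain ss "is" where q: "q = (ss, is)" by (cases q)
    ultimately have "length is = r - 1" by (simp add: rhs_index_def)
    then have "(\<Sum>p\<leftarrow>column_seq r i j q. bpar bb (fst p)) =
               (\<Sum>k\<leftarrow>map (\<lambda>k. (i # is @ [j]) ! k) [0..<r]. rpar bb k)"
      by (simp add: column_seq_def q bpar_def row_def comp_def)
    also have "\<dots> = rpar bb i + (\<Sum>k\<leftarrow>is. rpar bb k)"
      using \<open>length is = r - 1\<close> assms(1) by (simp add: map_rows_nth)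
    finally have sign: "(\<Sum>p\<leftarrow>column_seq r i j q. bpar bb (fst p)) = rpar bb i + (\<Sum>k\<leftarrow>is. rpar bb k)" .
    then show "((\<lambda>ps. fa_smult ((-1) ^ (\<Sum>p\<leftarrow>ps. bpar bb (fst p))) (fa_prod (map fa_gen ps)))
                 \<circ> column_seq r i j) q =
        (case q of (ss, is) \<Rightarrow> let rows = i # is @ [j] in
          fa_smult ((-1) ^ (rpar bb i + (\<Sum>k\<leftarrow>is. rpar bb k)))
            (fa_prod (map (\<lambda>k. eh (ss ! k) (rows ! k) (rows ! Suc k)) [0..<r])))"
      using sign by (simp add: q column_seq_def eh_def comp_def)
  qed
  finally show ?thesis .
qed

lemma Uh_eq_refl: "Uh_eq m n l bb x x"
proof -
  have "fa_sub x x = fa_zero" by (simp add: fa_sub_def fa_zero_def)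
  then show ?thesis by (simp add: Uh_eq_def fa_ideal.zero)
qed

theorem lemma4p3:
  fixes m n l r i j :: nat and bb :: "nat \<Rightarrow> bool"
  assumes "card {k \<in> {1..m+n}. bb k} = n"
    and "1 \<le> i" "i \<le> m + n" "1 \<le> j" "j \<le> m + n"
    and "1 \<le> r" "r \<le> l"
  shows "Uh_eq m n l bb (mu m n l bb (tpoly m n l bb r i j)) (rhs m n l bb r i j)"
  using assms by (simp add: mu_tpoly_eq_rhs Uh_eq_refl)

end
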